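(* There exist a real number $d>1$, a family $\mathcal{H}$ of finite graphs with $\mu_{\log}(\mathcal{H})\le d$, and a real $\lambda\in(0,\lambda_c(d))$ such that $\lambda$ is an accumulation point of the zeros of the partition functions $\{Z_H: H\in\mathcal{H}\}$; in particular, no set of the form $\{z\in\mathbb{C}:|z-z_0|<\delta\text{ for some }z_0\in[0,\lambda_c(d))\}$ with $\delta>0$ is zero-free for all $Z_H$, $H\in\mathcal{H}$.
   Context: For a finite graph $G$, $Z_G(z)=\sum_I z^{|I|}$ over independent sets $I$ of $G$. A point $a$ is an accumulation point of the zeros of a family of functions if every neighborhood of $a$ contains a zero of some member of the family. A self-avoiding walk (SAW) of length $i$ from $v$ is a walk $v=v_0,\dots,v_i$ with all vertices distinct; $\mathcal{N}_{\le \ell}(G,v)$ is the number of SAWs of length between $1$ and $\ell$ starting at $v$. "$\mu_{\log}(\mathcal{H})\le d$" means: there exist constants $a,c$ such that for every $G=(V,E)\in\mathcal{H}$, every $v\in V$ and every $\ell\ge a\log|V|$, $\mathcal{N}_{\le\ell}(G,v)\le c\,d^\ell$. For $x>1$, $\lambda_c(x)=x^x/(x-1)^{x+1}$. *)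

theory Defs
  imports "HOL-Analysis.Analysis"
begin

type_synonym graph = "nat set \<times> (nat \<Rightarrow> nat \<Rightarrow> bool)"

definition verts :: "graph \<Rightarrow> nat set" where "verts G = fst G"
definition adj :: "graph \<Rightarrow> nat \<Rightarrow> nat \<Rightarrow> bool" where "adj G = snd G"

definition finite_graph :: "graph \<Rightarrow> bool" where
  "finite_graph G \<longleftrightarrow> finite (verts G)
     \<and> (\<forall>x y. adj G x y \<longrightarrow> x \<in> verts G \<and> y \<in> verts G)
     \<and> (\<forall>x y. adj G x y \<longrightarrow> adj G y x)
     \<and> (\<forall>x. \<not> adj G x x)"

definition independent_sets :: "graph \<Rightarrow> nat set set" where
  "independent_sets G = {I. I \<subseteq> verts G \<and> (\<forall>x\<in>I. \<forall>y\<in>I. \<not> adj G x y)}"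

definition indep_poly :: "graph \<Rightarrow> complex \<Rightarrow> complex" where
  "indep_poly G z = (\<Sum>I\<in>independent_sets G. z ^ card I)"

definition saws :: "graph \<Rightarrow> nat \<Rightarrow> nat \<Rightarrow> nat list set" where
  "saws G v i = {p. length p = i + 1 \<and> p ! 0 = v \<and> distinct p
      \<and> set p \<subseteq> verts G \<and> (\<forall>j<i. adj G (p ! j) (p ! Suc j))}"

definition num_saws_le :: "graph \<Rightarrow> nat \<Rightarrow> nat \<Rightarrow> nat" where
  "num_saws_le G v l = card (\<Union>i\<in>{1..l}. saws G v i)"

definition mu_log_le :: "graph set \<Rightarrow> real \<Rightarrow> bool" where
  "mu_log_le \<H> d \<longleftrightarrow> (\<exists>a c::real. \<forall>G\<in>\<H>. \<forall>v\<in>verts G. \<forall>l::nat.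
      real l \<ge> a * ln (real (card (verts G))) \<longrightarrow> real (num_saws_le G v l) \<le> c * d ^ l)"

definition lambda_c :: "real \<Rightarrow> real" where
  "lambda_c x = x powr x / (x - 1) powr (x + 1)"

definition zero_accumulation_point :: "graph set \<Rightarrow> complex \<Rightarrow> bool" where
  "zero_accumulation_point \<H> a \<longleftrightarrow>
     (\<forall>e>0. \<exists>H\<in>\<H>. \<exists>z. indep_poly H z = 0 \<and> dist z a < e)"

end

theory Submission
  imports Defs
begin

(*
  Let n = (2^k + 2) k and let H_k be the complete multipartite graph with 2^k parts of size k
  and one part of size 2k, together with 3^(n^2) isolated vertices.  An independent set meets
  at most one part, so with w = (1 + z)^k

    Z_{H_k}(z) = (w^2 + 2^k w - 2^k) (1 + z)^(3^(n^2)).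

  Taking w = -M for the positive root M of M^2 - 2^k M - 2^k, which lies in [2^k, 2^k + 1],
  gives the zero z_k = M^(1/k) e^(i pi/k) - 1, and z_k tends to 1 < 4 = lambda_c 2.
  A self-avoiding walk with at least one step stays on the n non-isolated vertices, so there
  are at most (n + 1)^n <= 2^(n^2) of them, whereas the isolated vertices make log |V| >= n^2.
  Hence for l >= log |V| there are at most 2^l walks, i.e. mu_log <= 2.
*)

lemma sum_Pow_power_card:
  fixes z :: "'a :: comm_semiring_1"
  assumes "finite A"
  shows "(\<Sum>S\<in>Pow A. z ^ card S) = (z + 1) ^ card A"
  using prod_add[OF assms, of "\<lambda>_. z" "\<lambda>_. 1"] by simp

lemma Pow_minus_empty_disjoint: "A \<inter> B = {} \<Longrightarrow> (Pow A - {{}}) \<inter> (Pow B - {{}}) = {}"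
  by blast

definition monochromatic_subsets :: "'a set \<Rightarrow> ('a \<Rightarrow> 'b) \<Rightarrow> 'a set set" where
  "monochromatic_subsets W p = {S. S \<subseteq> W \<and> (\<forall>x\<in>S. \<forall>y\<in>S. p x = p y)}"

lemma monochromatic_subsets_eq:
  "monochromatic_subsets W p = insert {} (\<Union>j\<in>p ` W. Pow {x\<in>W. p x = j} - {{}})"
  unfolding monochromatic_subsets_def by (auto simp: subset_iff)

lemma sum_monochromatic_subsets:
  fixes z :: "'c :: comm_ring_1"
  assumes "finite W"
  shows "(\<Sum>S\<in>monochromatic_subsets W p. z ^ card S)
           = 1 + (\<Sum>j\<in>p ` W. (z + 1) ^ card {x\<in>W. p x = j} - 1)"
proof -
  let ?P = "\<lambda>j. Pow {x\<in>W. p x = j} - {{}}"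
  have "(\<Sum>S\<in>monochromatic_subsets W p. z ^ card S) = 1 + (\<Sum>S\<in>(\<Union>j\<in>p ` W. ?P j). z ^ card S)"
    unfolding monochromatic_subsets_eq using assms by (subst sum.insert) auto
  also have "(\<Sum>S\<in>(\<Union>j\<in>p ` W. ?P j). z ^ card S) = (\<Sum>j\<in>p ` W. \<Sum>S\<in>?P j. z ^ card S)"
    using assms by (intro sum.UNION_disjoint ballI impI Pow_minus_empty_disjoint) auto
  also have "\<dots> = (\<Sum>j\<in>p ` W. (z + 1) ^ card {x\<in>W. p x = j} - 1)"
    using assms by (intro sum.cong refl) (simp add: sum_diff1 sum_Pow_power_card)
  finally show ?thesis .
qed

lemma independent_sets_multipartite_with_isolated:
  assumes "W \<subseteq> verts G" and adj_iff: "\<And>x y. adj G x y \<longleftrightarrow> x \<in> W \<and> y \<in> W \<and> p x \<noteq> p y"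
  shows "independent_sets G = (\<lambda>(S, T). S \<union> T) ` (monochromatic_subsets W p \<times> Pow (verts G - W))"
proof (intro equalityI subsetI)
  fix I assume "I \<in> independent_sets G"
  then have "(I \<inter> W, I - W) \<in> monochromatic_subsets W p \<times> Pow (verts G - W)"
    by (auto simp: independent_sets_def monochromatic_subsets_def adj_iff)
  then show "I \<in> (\<lambda>(S, T). S \<union> T) ` (monochromatic_subsets W p \<times> Pow (verts G - W))"
    by (rule rev_image_eqI) auto
qed (use assms in \<open>auto simp: independent_sets_def monochromatic_subsets_def\<close>)

lemma indep_poly_multipartite_with_isolated:
  assumes "finite (verts G)" "W \<subseteq> verts G"
    and "\<And>x y. adj G x y \<longleftrightarrow> x \<in> W \<and> y \<in> W \<and> p x \<noteq> p y"
  shows "indep_poly G z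
           = (\<Sum>S\<in>monochromatic_subsets W p. z ^ card S) * (z + 1) ^ card (verts G - W)"
proof -
  let ?M = "monochromatic_subsets W p" and ?U = "verts G - W"
  have power_card_Un: "z ^ card (S \<union> T) = z ^ card S * z ^ card T" if "(S, T) \<in> ?M \<times> Pow ?U" for S T
  proof -
    from that have "S \<subseteq> W" "T \<subseteq> ?U"
      by (auto simp: monochromatic_subsets_def)
    with assms(1,2) have "finite S" "finite T" "S \<inter> T = {}"
      by (auto intro: finite_subset)
    then show ?thesis
      by (simp add: card_Un_disjoint power_add)
  qed
  have inj: "inj_on (\<lambda>(S, T). S \<union> T) (?M \<times> Pow ?U)"
    by (rule inj_onI) (auto simp: monochromatic_subsets_def)
  have "indep_poly G z = (\<Sum>(S, T)\<in>?M \<times> Pow ?U. z ^ card (S \<union> T))"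
    unfolding indep_poly_def independent_sets_multipartite_with_isolated[OF assms(2,3)]
    using inj by (simp add: sum.reindex case_prod_unfold)
  also have "\<dots> = (\<Sum>(S, T)\<in>?M \<times> Pow ?U. z ^ card S * z ^ card T)"
    using power_card_Un by (intro sum.cong refl) auto
  also have "\<dots> = (\<Sum>S\<in>?M. \<Sum>T\<in>Pow ?U. z ^ card S * z ^ card T)"
    by (rule sum.cartesian_product[symmetric])
  also have "\<dots> = (\<Sum>S\<in>?M. z ^ card S) * (\<Sum>T\<in>Pow ?U. z ^ card T)"
    by (rule sum_product[symmetric])
  also have "\<dots> = (\<Sum>S\<in>?M. z ^ card S) * (z + 1) ^ card ?U"
    using assms(1) by (simp add: sum_Pow_power_card)
  finally show ?thesis .
qed

lemma sum_powers_le_Suc_power: "(\<Sum>i\<le>n. m ^ i) \<le> (m + 1 :: nat) ^ n"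
proof -
  have "(\<Sum>i\<le>n. m ^ i) \<le> (\<Sum>i\<le>n. (n choose i) * m ^ i * 1 ^ (n - i))"
    by (intro sum_mono) (simp add: Suc_le_eq)
  also have "\<dots> = (m + 1) ^ n"
    using binomial_ring[of m 1 n] by simp
  finally show ?thesis .
qed

lemma saw_vertices_subset:
  assumes edges: "\<And>x y. adj G x y \<Longrightarrow> x \<in> C \<and> y \<in> C"
    and "0 < i" "p \<in> saws G v i"
  shows "set p \<subseteq> C"
proof -
  from assms(3) have len: "length p = i + 1" and steps: "\<And>j. j < i \<Longrightarrow> adj G (p ! j) (p ! Suc j)"
    unfolding saws_def by auto
  have "p ! j \<in> C" if "j < length p" for j
  proof (cases "j < i")
    case True
    then show ?thesis using steps edges by blast
  next
    case False
    with that len \<open>0 < i\<close> have "j = Suc (i - 1)" "i - 1 < i" by auto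
    then show ?thesis using steps edges by metis
  qed
  then show ?thesis
    by (auto simp: in_set_conv_nth)
qed

lemma num_saws_le_bounded:
  assumes "finite C" and edges: "\<And>x y. adj G x y \<Longrightarrow> x \<in> C \<and> y \<in> C"
  shows "num_saws_le G v l \<le> (card C + 1) ^ card C"
proof -
  let ?L = "{xs. set xs \<subseteq> C \<and> length xs \<le> card C}"
  have "(\<Union>i\<in>{1..l}. saws G v i) \<subseteq> ?L"
  proof
    fix p assume "p \<in> (\<Union>i\<in>{1..l}. saws G v i)"
    then obtain i where "i \<in> {1..l}" "p \<in> saws G v i" by blast
    then have "set p \<subseteq> C"
      by (intro saw_vertices_subset[OF edges]) auto
    moreover have "distinct p"
      using \<open>p \<in> saws G v i\<close> by (simp add: saws_def)
    ultimately show "p \<in> ?L"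
      using \<open>finite C\<close> by (auto simp: distinct_card[symmetric] intro: card_mono)
  qed
  then have "num_saws_le G v l \<le> card ?L"
    unfolding num_saws_le_def using \<open>finite C\<close> by (intro card_mono finite_lists_length_le)
  also have "\<dots> = (\<Sum>i\<le>card C. card C ^ i)"
    using \<open>finite C\<close> by (rule card_lists_length_le)
  also have "\<dots> \<le> (card C + 1) ^ card C"
    by (rule sum_powers_le_Suc_power)
  finally show ?thesis .
qed

lemma mu_log_le_if_saws_bounded:
  fixes G :: "'i \<Rightarrow> graph" and s :: "'i \<Rightarrow> nat"
  assumes "1 \<le> d" "0 \<le> c"
    and saws: "\<And>k v l. k \<in> K \<Longrightarrow> v \<in> verts (G k) \<Longrightarrow> real (num_saws_le (G k) v l) \<le> c * d ^ s k"
    and size: "\<And>k. k \<in> K \<Longrightarrow> real (s k) \<le> ln (card (verts (G k)))"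
  shows "mu_log_le (G ` K) d"
proof -
  have "real (num_saws_le (G k) v l) \<le> c * d ^ l"
    if k: "k \<in> K" and v: "v \<in> verts (G k)" and "ln (card (verts (G k))) \<le> real l" for k v l
  proof -
    from that size have "s k \<le> l" by fastforce
    with \<open>1 \<le> d\<close> \<open>0 \<le> c\<close> have "c * d ^ s k \<le> c * d ^ l"
      by (intro mult_left_mono power_increasing)
    with saws[OF k v, of l] show ?thesis
      by linarith
  qed
  then show ?thesis
    unfolding mu_log_le_def by (intro exI[of _ 1] exI[of _ c]) auto
qed

lemma zero_accumulation_point_if_tendsto:
  assumes "\<forall>\<^sub>F k in sequentially. G k \<in> \<H> \<and> indep_poly (G k) (z k) = 0" and "z \<longlonglongrightarrow> a"
  shows "zero_accumulation_point \<H> a"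
  unfolding zero_accumulation_point_def
proof (intro allI impI)
  fix e :: real assume "0 < e"
  with assms(2) have "\<forall>\<^sub>F k in sequentially. dist (z k) a < e"
    by (rule tendstoD)
  with assms(1) have "\<forall>\<^sub>F k in sequentially. (G k \<in> \<H> \<and> indep_poly (G k) (z k) = 0) \<and> dist (z k) a < e"
    by (rule eventually_conj)
  then show "\<exists>H\<in>\<H>. \<exists>z. indep_poly H z = 0 \<and> dist z a < e"
    using eventually_happens'[OF sequentially_bot] by blast
qed

lemma zero_near_interval_if_zero_accumulation_point:
  assumes "zero_accumulation_point \<H> (complex_of_real lam)" "0 \<le> lam" "lam < L" "0 < del"
  shows "\<exists>H\<in>\<H>. \<exists>z. indep_poly H z = 0
           \<and> (\<exists>z0::real. 0 \<le> z0 \<and> z0 < L \<and> cmod (z - complex_of_real z0) < del)"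
proof -
  obtain H z where "H \<in> \<H>" "indep_poly H z = 0" "dist z (complex_of_real lam) < del"
    using assms(1,4) unfolding zero_accumulation_point_def by blast
  with assms(2,3) show ?thesis
    by (intro bexI[of _ H] exI[of _ z] conjI exI[of _ lam]) (simp_all add: dist_norm)
qed

definition core_size :: "nat \<Rightarrow> nat" where
  "core_size k = (2 ^ k + 2) * k"

definition part_index :: "nat \<Rightarrow> nat \<Rightarrow> nat" where
  "part_index k x = min (x div k) (2 ^ k)"

(* part_index k cuts {0..<core_size k} into 2^k blocks of k consecutive vertices followed by
   one block of 2k; these blocks are the parts, and all larger vertices are isolated. *)
definition padded_multipartite :: "nat \<Rightarrow> graph" where
  "padded_multipartite k = ({0..<core_size k + 3 ^ (core_size k)\<^sup>2},
     \<lambda>x y. x < core_size k \<and> y < core_size k \<and> part_index k x \<noteq> part_index k y)"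

lemma verts_padded_multipartite:
  "verts (padded_multipartite k) = {0..<core_size k + 3 ^ (core_size k)\<^sup>2}"
  by (simp add: verts_def padded_multipartite_def)

lemma adj_padded_multipartite:
  "adj (padded_multipartite k) x y \<longleftrightarrow> x < core_size k \<and> y < core_size k \<and> part_index k x \<noteq> part_index k y"
  by (simp add: adj_def padded_multipartite_def)

lemma finite_graph_padded_multipartite: "finite_graph (padded_multipartite k)"
  unfolding finite_graph_def verts_padded_multipartite adj_padded_multipartite by auto

lemma part_index_eq_iff:
  assumes "0 < k" "j \<le> 2 ^ k"
  shows "part_index k x = j \<longleftrightarrow> j * k \<le> x \<and> (j = 2 ^ k \<or> x < Suc j * k)"
proof -
  have "part_index k x = j \<longleftrightarrow> j \<le> x div k \<and> (j = 2 ^ k \<or> x div k < Suc j)"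
    using assms(2) unfolding part_index_def by (auto simp: min_def)
  also have "\<dots> \<longleftrightarrow> j * k \<le> x \<and> (j = 2 ^ k \<or> x < Suc j * k)"
    using assms(1) by (simp add: less_eq_div_iff_mult_less_eq div_less_iff_less_mult)
  finally show ?thesis .
qed

lemma part_index_image:
  assumes "0 < k"
  shows "part_index k ` {0..<core_size k} = {0..2 ^ k}"
proof (intro equalityI subsetI)
  fix j :: nat assume "j \<in> {0..2 ^ k}"
  then have "j * k \<le> 2 ^ k * k"
    by simp
  moreover have "core_size k = 2 ^ k * k + 2 * k"
    by (simp add: core_size_def algebra_simps)
  ultimately have "j * k < core_size k"
    using assms by linarith
  moreover have "part_index k (j * k) = j"
    using assms \<open>j \<in> {0..2 ^ k}\<close> by (simp add: part_index_eq_iff)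
  ultimately show "j \<in> part_index k ` {0..<core_size k}"
    by (metis atLeastLessThan_iff image_eqI zero_le)
qed (auto simp: part_index_def)

lemma card_part_fibre:
  assumes "0 < k" "j \<le> 2 ^ k"
  shows "card {x\<in>{0..<core_size k}. part_index k x = j} = (if j = 2 ^ k then 2 * k else k)"
proof -
  have "Suc j * k \<le> core_size k"
    using assms(2) unfolding core_size_def by (intro mult_right_mono) auto
  then have "{x\<in>{0..<core_size k}. part_index k x = j}
               = {j * k..<(if j = 2 ^ k then core_size k else Suc j * k)}"
    using assms by (auto simp: part_index_eq_iff)
  then show ?thesis
    by (simp add: core_size_def algebra_simps)
qed

lemma indep_poly_padded_multipartite:
  assumes "0 < k"
  shows "indep_poly (padded_multipartite k) z
           = (((z + 1) ^ k)\<^sup>2 + 2 ^ k * (z + 1) ^ k - 2 ^ k) * (z + 1) ^ 3 ^ (core_size k)\<^sup>2"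
proof -
  let ?W = "{0..<core_size k}" and ?N = "\<lambda>j. card {x\<in>{0..<core_size k}. part_index k x = j}"
  have "indep_poly (padded_multipartite k) z
          = (\<Sum>S\<in>monochromatic_subsets ?W (part_index k). z ^ card S) * (z + 1) ^ 3 ^ (core_size k)\<^sup>2"
    by (subst indep_poly_multipartite_with_isolated[where W = ?W and p = "part_index k"])
       (auto simp: verts_padded_multipartite adj_padded_multipartite)
  also have "(\<Sum>S\<in>monochromatic_subsets ?W (part_index k). z ^ card S)
               = 1 + (\<Sum>j\<in>insert (2 ^ k) {..<(2::nat) ^ k}. (z + 1) ^ ?N j - 1)"
    using part_index_image[OF assms]
    by (simp add: sum_monochromatic_subsets atLeast0AtMost lessThan_Suc_atMost[symmetric])
  also have "\<dots> = 1 + (((z + 1) ^ (2 * k) - 1) + (\<Sum>j<(2::nat) ^ k. (z + 1) ^ k - 1))"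
    using card_part_fibre[OF assms] by simp
  also have "\<dots> = ((z + 1) ^ k)\<^sup>2 + 2 ^ k * (z + 1) ^ k - 2 ^ k"
    by (simp add: power_mult algebra_simps)
  finally show ?thesis .
qed

definition zero_modulus :: "nat \<Rightarrow> real" where
  "zero_modulus k = (2 ^ k + sqrt (4 ^ k + 4 * 2 ^ k)) / 2"

lemma four_power_eq_power2: "(4 :: real) ^ k = (2 ^ k)\<^sup>2"
  unfolding power2_eq_square by (simp flip: power_mult_distrib)

lemma zero_modulus_quadratic: "(zero_modulus k)\<^sup>2 - 2 ^ k * zero_modulus k - 2 ^ k = 0"
  unfolding zero_modulus_def four_power_eq_power2 by (simp add: power2_eq_square field_simps)

lemma zero_modulus_bounds: "2 ^ k \<le> zero_modulus k" "zero_modulus k \<le> 2 ^ k + 1"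
proof -
  have "2 ^ k \<le> sqrt (4 ^ k + 4 * 2 ^ k)"
    by (rule real_le_rsqrt) (simp add: four_power_eq_power2)
  moreover have "sqrt (4 ^ k + 4 * 2 ^ k) \<le> 2 ^ k + 2"
    by (rule real_le_lsqrt) (simp_all add: four_power_eq_power2 power2_eq_square algebra_simps)
  ultimately show "2 ^ k \<le> zero_modulus k" "zero_modulus k \<le> 2 ^ k + 1"
    unfolding zero_modulus_def by simp_all
qed

definition zero_point :: "nat \<Rightarrow> complex" where
  "zero_point k = rcis (root k (zero_modulus k)) (pi / k) - 1"

lemma zero_point_plus_one_power:
  assumes "0 < k"
  shows "(zero_point k + 1) ^ k = - of_real (zero_modulus k)"
proof -
  have "0 \<le> zero_modulus k"
    by (rule order_trans[OF _ zero_modulus_bounds(1)]) simp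
  have "(zero_point k + 1) ^ k = rcis (root k (zero_modulus k) ^ k) (real k * (pi / real k))"
    by (simp add: zero_point_def DeMoivre2)
  also have "\<dots> = rcis (zero_modulus k) pi"
    using assms \<open>0 \<le> zero_modulus k\<close> by simp
  also have "\<dots> = - of_real (zero_modulus k)"
    by (simp add: rcis_def)
  finally show ?thesis .
qed

lemma indep_poly_zero_point:
  assumes "0 < k"
  shows "indep_poly (padded_multipartite k) (zero_point k) = 0"
proof -
  have "(- complex_of_real (zero_modulus k))\<^sup>2 + 2 ^ k * (- complex_of_real (zero_modulus k)) - 2 ^ k
          = of_real ((zero_modulus k)\<^sup>2 - 2 ^ k * zero_modulus k - 2 ^ k)"
    by simp
  also have "\<dots> = 0"
    by (simp only: zero_modulus_quadratic of_real_0)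
  finally show ?thesis
    using assms by (simp add: indep_poly_padded_multipartite zero_point_plus_one_power)
qed

lemma root_zero_modulus_tendsto: "(\<lambda>k. root k (zero_modulus k)) \<longlonglongrightarrow> 2"
proof -
  have bounds: "2 \<le> root k (zero_modulus k) \<and> root k (zero_modulus k) \<le> 2 * root k 2"
    if "0 < k" for k
  proof
    have "root k (2 ^ k) \<le> root k (zero_modulus k)"
      by (rule real_root_le_mono[OF that zero_modulus_bounds(1)])
    then show "2 \<le> root k (zero_modulus k)"
      using that by (simp add: real_root_power_cancel)
    have "(1 :: real) \<le> 2 ^ k"
      by simp
    then have "zero_modulus k \<le> 2 ^ k * 2"
      using zero_modulus_bounds(2)[of k] by linarith
    then have "root k (zero_modulus k) \<le> root k (2 ^ k * 2)"
      by (rule real_root_le_mono[OF that])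
    then show "root k (zero_modulus k) \<le> 2 * root k 2"
      using that by (simp add: real_root_mult real_root_power_cancel)
  qed
  have "(\<lambda>k. 2 * root k 2) \<longlonglongrightarrow> 2"
    using tendsto_mult[OF tendsto_const LIMSEQ_root_const[of 2]] by simp
  then show ?thesis
  proof (rule tendsto_sandwich[OF _ _ tendsto_const, rotated 2])
    show "\<forall>\<^sub>F k in sequentially. 2 \<le> root k (zero_modulus k)"
      and "\<forall>\<^sub>F k in sequentially. root k (zero_modulus k) \<le> 2 * root k 2"
      using bounds by (auto intro: eventually_sequentiallyI[of 1])
  qed
qed

lemma zero_point_tendsto: "zero_point \<longlonglongrightarrow> 1"
proof -
  have "(\<lambda>k. rcis (root k (zero_modulus k)) (pi / k) - 1) \<longlonglongrightarrow> rcis 2 0 - 1"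
    by (intro tendsto_diff tendsto_rcis root_zero_modulus_tendsto lim_const_over_n tendsto_const)
  then show ?thesis
    by (simp add: zero_point_def[abs_def])
qed

lemma num_saws_le_padded_multipartite:
  "num_saws_le (padded_multipartite k) v l \<le> 2 ^ (core_size k)\<^sup>2"
proof -
  let ?n = "core_size k"
  have "num_saws_le (padded_multipartite k) v l \<le> (card {0..<?n} + 1) ^ card {0..<?n}"
    by (rule num_saws_le_bounded) (auto simp: adj_padded_multipartite)
  also have "\<dots> = (?n + 1) ^ ?n"
    by simp
  also have "\<dots> \<le> (2 ^ ?n) ^ ?n"
    by (intro power_mono) (simp_all add: Suc_leI)
  also have "\<dots> = 2 ^ ?n\<^sup>2"
    by (simp add: power2_eq_square power_mult)
  finally show ?thesis .
qed

lemma core_size_sq_le_ln_card: "real ((core_size k)\<^sup>2) \<le> ln (card (verts (padded_multipartite k)))"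
proof -
  let ?m = "(core_size k)\<^sup>2"
  have "real ?m \<le> real ?m * ln 3"
    using ln3_gt_1 by (simp add: mult_le_cancel_left1)
  also have "\<dots> = ln (3 ^ ?m)"
    by (simp add: ln_realpow)
  also have "\<dots> \<le> ln (card (verts (padded_multipartite k)))"
    by (subst ln_le_cancel_iff) (simp_all add: verts_padded_multipartite add_nonneg_pos)
  finally show ?thesis .
qed

lemma mu_log_le_padded_multipartite: "mu_log_le (padded_multipartite ` {k. 0 < k}) 2"
proof (rule mu_log_le_if_saws_bounded[where c = 1 and s = "\<lambda>k. (core_size k)\<^sup>2"])
  fix k v l
  show "real (num_saws_le (padded_multipartite k) v l) \<le> 1 * 2 ^ (core_size k)\<^sup>2"
    using of_nat_mono[OF num_saws_le_padded_multipartite, where 'a = real] by simp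
qed (use core_size_sq_le_ln_card in simp_all)

lemma zero_accumulation_point_padded_multipartite:
  "zero_accumulation_point (padded_multipartite ` {k. 0 < k}) 1"
  using indep_poly_zero_point zero_point_tendsto
  by (intro zero_accumulation_point_if_tendsto[where G = padded_multipartite and z = zero_point])
     (auto intro: eventually_sequentiallyI[of 1])

lemma lambda_c_2: "lambda_c 2 = 4"
  by (simp add: lambda_c_def powr_numeral)

theorem lemma3p2:
  shows "\<exists>d::real. d > 1 \<and> (\<exists>\<H>::graph set. (\<forall>G\<in>\<H>. finite_graph G) \<and> mu_log_le \<H> d
     \<and> (\<exists>lam::real. 0 < lam \<and> lam < lambda_c d
          \<and> zero_accumulation_point \<H> (complex_of_real lam)
          \<and> (\<forall>del>0. \<exists>H\<in>\<H>. \<exists>z. indep_poly H z = 0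
                 \<and> (\<exists>z0::real. 0 \<le> z0 \<and> z0 < lambda_c d \<and> cmod (z - complex_of_real z0) < del))))"
proof (rule exI[of _ 2], intro conjI exI[of _ "padded_multipartite ` {k. 0 < k}"] exI[of _ "1::real"])
  show "1 < lambda_c 2"
    by (simp add: lambda_c_2)
  show accumulation: "zero_accumulation_point (padded_multipartite ` {k. 0 < k}) (complex_of_real 1)"
    using zero_accumulation_point_padded_multipartite by simp
  show "\<forall>del>0. \<exists>H\<in>padded_multipartite ` {k. 0 < k}. \<exists>z. indep_poly H z = 0
          \<and> (\<exists>z0::real. 0 \<le> z0 \<and> z0 < lambda_c 2 \<and> cmod (z - complex_of_real z0) < del)"
    using zero_near_interval_if_zero_accumulation_point[OF accumulation] \<open>1 < lambda_c 2\<close> by simp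
qed (use finite_graph_padded_multipartite mu_log_le_padded_multipartite in auto)

end
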